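(* Let $\ell:\mathbb{R}\times Y\to\mathbb{R}$ be a loss function that is convex in its first argument. Let $A$ be a learning algorithm that on a dataset $S\in(X\times Y)^n$ outputs a function $A(S,\cdot):X\to\mathbb{R}$ and is uniform replace-one prediction stable with rate $\gamma$. Then for every $\epsilon>0$ there exists an $\epsilon$-differentially private prediction algorithm $M$ (with real-valued outputs) such that for every dataset $S\in(X\times Y)^n$ and every probability distribution $P$ over $X\times Y$: (1) if $\ell(\cdot,y)$ is $L_\ell$-Lipschitz for all $y\in Y$, then $\mathbb{E}_{(x,y)\sim P,\,M}[\ell(M(S,x),y)]\le \mathbb{E}_{(x,y)\sim P}[\ell(A(S,x),y)]+L_\ell\gamma/\epsilon$; (2) if $\ell(\cdot,y)$ is $\sigma$-smooth for all $y\in Y$, then $\mathbb{E}_{(x,y)\sim P,\,M}[\ell(M(S,x),y)]\le \mathbb{E}_{(x,y)\sim P}[\ell(A(S,x),y)]+\sigma\gamma^2/\epsilon^2$.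
   Context: $A$ is uniform replace-one (RO) prediction stable with rate $\gamma$ if for all datasets $S,S'\in(X\times Y)^n$ differing in a single element and every $x\in X$, $|A(S,x)-A(S',x)|\le\gamma$. A prediction algorithm $M$ takes $S$ and $x\in X$ and outputs a (possibly random) value $M(S,x)$; it is an $\epsilon$-differentially private prediction algorithm if for every $x$, for all $S,S'$ differing in a single element and every set $O$, $\Pr[M(S,x)\in O]\le e^{\epsilon}\Pr[M(S',x)\in O]$. A function $g:\mathbb{R}\to\mathbb{R}$ is $\sigma$-smooth if it is differentiable with $\sigma$-Lipschitz derivative. *)

theory Defs
  imports "HOL-Probability.Probability"
begin

definition ro_neighbors :: "nat \<Rightarrow> 'a list \<Rightarrow> 'a list \<Rightarrow> bool" where
  "ro_neighbors n S S' \<longleftrightarrow> length S = n \<and> length S' = n \<and>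
     (\<exists>i<n. \<exists>z. S' = S[i := z])"

definition uniform_RO_stable ::
  "nat \<Rightarrow> (('x \<times> 'y) list \<Rightarrow> 'x \<Rightarrow> real) \<Rightarrow> real \<Rightarrow> bool" where
  "uniform_RO_stable n A \<gamma> \<longleftrightarrow>
     (\<forall>S S' x. ro_neighbors n S S' \<longrightarrow> \<bar>A S x - A S' x\<bar> \<le> \<gamma>)"

definition prediction_algorithm ::
  "nat \<Rightarrow> (('x \<times> 'y) list \<Rightarrow> 'x \<Rightarrow> real measure) \<Rightarrow> bool" where
  "prediction_algorithm n M \<longleftrightarrow>
     (\<forall>S x. length S = n \<longrightarrow> prob_space (M S x) \<and> sets (M S x) = sets borel)"

definition dp_prediction ::
  "nat \<Rightarrow> real \<Rightarrow> (('x \<times> 'y) list \<Rightarrow> 'x \<Rightarrow> real measure) \<Rightarrow> bool" where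
  "dp_prediction n \<epsilon> M \<longleftrightarrow> prediction_algorithm n M \<and>
     (\<forall>x S S' E. ro_neighbors n S S' \<longrightarrow> E \<in> sets borel \<longrightarrow>
        measure (M S x) E \<le> exp \<epsilon> * measure (M S' x) E)"

definition smooth_with :: "real \<Rightarrow> (real \<Rightarrow> real) \<Rightarrow> bool" where
  "smooth_with \<sigma> g \<longleftrightarrow> (\<forall>z. g differentiable (at z)) \<and> \<sigma>-lipschitz_on UNIV (deriv g)"

end

(* Output perturbation: answer with A(S,x) + Z, where Z is Laplace noise of scale b = gamma/epsilon.
   Replacing one data point moves A(S,x) by at most gamma, and shifting a Laplace density by at most
   epsilon*b changes it pointwise by at most the factor e^epsilon, which gives epsilon-DP.
   The price is E l(a + Z, y) - l(a, y) at every point a: for L-Lipschitz l it is at most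
   L E|Z| = L b; for sigma-smooth l the first-order term vanishes because E Z = 0, and the
   second-order Taylor remainder contributes at most sigma/2 E Z^2 = sigma b^2. *)
theory Submission
  imports Defs
begin

lemma abs_le_half_sq_if_deriv_bound:
  fixes \<phi> \<phi>' :: "real \<Rightarrow> real"
  assumes zero: "\<phi> 0 = 0"
    and deriv: "\<And>s. (\<phi> has_real_derivative \<phi>' s) (at s)"
    and bound: "\<And>s. \<bar>\<phi>' s\<bar> \<le> \<sigma> * \<bar>s\<bar>"
  shows "\<bar>\<phi> t\<bar> \<le> \<sigma> / 2 * t\<^sup>2"
proof -
  have nonneg: "\<bar>f t\<bar> \<le> \<sigma> / 2 * t\<^sup>2"
    if f0: "f 0 = 0" and df: "\<And>s. (f has_real_derivative f' s) (at s)"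
      and bf: "\<And>s. \<bar>f' s\<bar> \<le> \<sigma> * \<bar>s\<bar>" and t: "0 \<le> t"
    for f f' :: "real \<Rightarrow> real" and t
  proof -
    have "c * f t - \<sigma> / 2 * t\<^sup>2 \<le> 0" if c: "\<bar>c\<bar> = 1" for c
    proof -
      have "c * f t - \<sigma> / 2 * t\<^sup>2 \<le> c * f 0 - \<sigma> / 2 * 0\<^sup>2"
      proof (rule DERIV_nonpos_imp_nonincreasing[OF t])
        fix s :: real assume "0 \<le> s"
        moreover have "\<bar>c * f' s\<bar> \<le> \<sigma> * \<bar>s\<bar>" using bf[of s] c by (simp add: abs_mult)
        moreover have "((\<lambda>s. c * f s - \<sigma> / 2 * s\<^sup>2) has_real_derivative c * f' s - \<sigma> * s) (at s)"
          by (rule derivative_eq_intros df refl | simp)+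
        ultimately show "\<exists>y. ((\<lambda>s. c * f s - \<sigma> / 2 * s\<^sup>2) has_real_derivative y) (at s) \<and> y \<le> 0"
          by (intro exI[of _ "c * f' s - \<sigma> * s"]) auto
      qed
      then show ?thesis using f0 by simp
    qed
    from this[of 1] this[of "-1"] show ?thesis by linarith
  qed
  show ?thesis
  proof (cases "0 \<le> t")
    case True
    then show ?thesis by (rule nonneg[OF zero deriv bound])
  next
    case False
    have "\<bar>\<phi> (- (- t))\<bar> \<le> \<sigma> / 2 * (- t)\<^sup>2"
    proof (rule nonneg[of "\<lambda>s. \<phi> (- s)" "\<lambda>s. - \<phi>' (- s)"])
      show "((\<lambda>s. \<phi> (- s)) has_real_derivative - \<phi>' (- s)) (at s)" for s
        using deriv[of "- s"] by (simp add: DERIV_mirror)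
      show "\<bar>- \<phi>' (- s)\<bar> \<le> \<sigma> * \<bar>s\<bar>" for s using bound[of "- s"] by simp
    qed (use zero False in auto)
    then show ?thesis by simp
  qed
qed

lemma smooth_with_taylor_bound:
  assumes "smooth_with \<sigma> g"
  shows "\<bar>g (a + t) - g a - deriv g a * t\<bar> \<le> \<sigma> / 2 * t\<^sup>2"
proof (rule abs_le_half_sq_if_deriv_bound)
  show "((\<lambda>t. g (a + t) - g a - deriv g a * t) has_real_derivative
      deriv g (a + s) - deriv g a) (at s)" for s
  proof -
    have "(g has_real_derivative deriv g (a + s)) (at (a + s))"
      using assms DERIV_deriv_iff_real_differentiable unfolding smooth_with_def by blast
    then have shifted: "((\<lambda>t. g (a + t)) has_real_derivative deriv g (a + s)) (at s)"
      using DERIV_shift[of g "deriv g (a + s)" s a] by (simp add: add.commute)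
    show ?thesis by (rule derivative_eq_intros shifted refl | simp)+
  qed
  show "\<bar>deriv g (a + s) - deriv g a\<bar> \<le> \<sigma> * \<bar>s\<bar>" for s
    using assms unfolding smooth_with_def lipschitz_on_def dist_real_def
    by (metis UNIV_I add_diff_cancel_left')
qed simp

definition laplace_density :: "real \<Rightarrow> real \<Rightarrow> real" where
  "laplace_density b t = exp (- \<bar>t\<bar> / b) / (2 * b)"

lemma borel_measurable_laplace_density[measurable]: "laplace_density b \<in> borel_measurable borel"
  unfolding laplace_density_def by measurable

lemma laplace_density_nonneg: "0 < b \<Longrightarrow> 0 \<le> laplace_density b t"
  unfolding laplace_density_def by simp

lemma has_bochner_integral_exponential_density_power:
  assumes "0 < b"
  shows "has_bochner_integral lborel (\<lambda>t. exponential_density (1 / b) t * t ^ i) (fact i * b ^ i)"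
proof (rule has_bochner_integral_nn_integral)
  show "(\<integral>\<^sup>+ t. ennreal (exponential_density (1 / b) t * t ^ i) \<partial>lborel) = ennreal (fact i * b ^ i)"
    using nn_integral_erlang_ith_moment[of "1 / b" 0 i] assms by (simp add: power_one_over)
qed (use assms in \<open>auto simp: exponential_density_def\<close>)

text \<open>The Laplace density is the average of the exponential density and its reflection.\<close>
lemma has_bochner_integral_laplace_density_mult:
  assumes b: "0 < b" and [measurable]: "g \<in> borel_measurable borel"
    and I: "has_bochner_integral lborel (\<lambda>t. exponential_density (1 / b) t * g t) I"
    and J: "has_bochner_integral lborel (\<lambda>t. exponential_density (1 / b) t * g (- t)) J"
  shows "has_bochner_integral lborel (\<lambda>t. laplace_density b t * g t) ((I + J) / 2)"
proof -
  let ?e = "exponential_density (1 / b)"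
  have "has_bochner_integral lborel (\<lambda>t. ?e (- t) * g t) J"
    using J lborel_has_bochner_integral_real_affine_iff[of "-1" "\<lambda>t. ?e (- t) * g t" J 0] by simp
  then have "has_bochner_integral lborel (\<lambda>t. (?e t * g t + ?e (- t) * g t) / 2) ((I + J) / 2)"
    using I by (intro has_bochner_integral_divide_zero has_bochner_integral_add)
  moreover have "AE t in lborel. (?e t * g t + ?e (- t) * g t) / 2 = laplace_density b t * g t"
    using AE_lborel_singleton[of 0]
  proof (rule AE_mp, intro AE_I2 impI)
    fix t :: real assume "t \<noteq> 0"
    then show "(?e t * g t + ?e (- t) * g t) / 2 = laplace_density b t * g t"
      using b by (cases "t < 0") (auto simp: laplace_density_def exponential_density_def field_simps)
  qed
  ultimately show ?thesis by (subst (asm) has_bochner_integral_cong_AE) auto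
qed

lemma laplace_density_moments:
  assumes b: "0 < b"
  shows "has_bochner_integral lborel (laplace_density b) 1"
    and "has_bochner_integral lborel (\<lambda>t. laplace_density b t * t) 0"
    and "has_bochner_integral lborel (\<lambda>t. laplace_density b t * \<bar>t\<bar>) b"
    and "has_bochner_integral lborel (\<lambda>t. laplace_density b t * t\<^sup>2) (2 * b\<^sup>2)"
proof -
  note moment = has_bochner_integral_exponential_density_power[OF b]
  have abs_eq: "exponential_density (1 / b) t * \<bar>t\<bar> = exponential_density (1 / b) t * t"
    "exponential_density (1 / b) t * \<bar>- t\<bar> = exponential_density (1 / b) t * t" for t
    by (auto simp: exponential_density_def)
  show "has_bochner_integral lborel (laplace_density b) 1"
    using has_bochner_integral_laplace_density_mult[OF b, of "\<lambda>_. 1" 1 1] moment[of 0] by simp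
  show "has_bochner_integral lborel (\<lambda>t. laplace_density b t * t) 0"
    using has_bochner_integral_laplace_density_mult[OF b, of "\<lambda>t. t" b "- b"] moment[of 1]
    by (simp add: has_bochner_integral_minus)
  show "has_bochner_integral lborel (\<lambda>t. laplace_density b t * \<bar>t\<bar>) b"
    using has_bochner_integral_laplace_density_mult[OF b, of "\<lambda>t. \<bar>t\<bar>" b b] moment[of 1]
    by (simp add: abs_eq)
  show "has_bochner_integral lborel (\<lambda>t. laplace_density b t * t\<^sup>2) (2 * b\<^sup>2)"
    using has_bochner_integral_laplace_density_mult[OF b, of "\<lambda>t. t\<^sup>2" "2 * b\<^sup>2" "2 * b\<^sup>2"] moment[of 2]
    by (simp add: numeral_2_eq_2)
qed

text \<open>Scale \<open>0\<close> gives the point mass at \<open>a\<close>: the noiseless mechanism, needed when \<open>\<gamma> = 0\<close>.\<close>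
definition laplace_measure :: "real \<Rightarrow> real \<Rightarrow> real measure" where
  "laplace_measure b a =
     (if b = 0 then return borel a else density lborel (\<lambda>z. laplace_density b (z - a)))"

lemma sets_laplace_measure[simp, measurable_cong]: "sets (laplace_measure b a) = sets borel"
  by (simp add: laplace_measure_def)

lemma has_bochner_integral_laplace_measure:
  assumes b: "0 < b" and [measurable]: "h \<in> borel_measurable borel"
  shows "has_bochner_integral (laplace_measure b a) h I \<longleftrightarrow>
    has_bochner_integral lborel (\<lambda>t. laplace_density b t * h (a + t)) I"
proof -
  have "has_bochner_integral (laplace_measure b a) h I \<longleftrightarrow>
      has_bochner_integral lborel (\<lambda>z. laplace_density b (z - a) * h z) I"
    using b laplace_density_nonneg[OF b]
    by (simp add: laplace_measure_def has_bochner_integral_iff integrable_density integral_density)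
  also have "\<dots> \<longleftrightarrow> has_bochner_integral lborel (\<lambda>t. laplace_density b t * h (a + t)) I"
    using lborel_has_bochner_integral_real_affine_iff[of 1 "\<lambda>z. laplace_density b (z - a) * h z" I a]
    by simp
  finally show ?thesis .
qed

lemma integral_laplace_measure:
  assumes b: "0 < b" and [measurable]: "h \<in> borel_measurable borel"
  shows "(\<integral>z. h z \<partial>laplace_measure b a) = (\<integral>t. laplace_density b t * h (a + t) \<partial>lborel)"
proof (cases "integrable lborel (\<lambda>t. laplace_density b t * h (a + t))")
  case True
  then have "has_bochner_integral (laplace_measure b a) h (\<integral>t. laplace_density b t * h (a + t) \<partial>lborel)"
    by (simp add: has_bochner_integral_laplace_measure[OF b] has_bochner_integral_integrable)
  then show ?thesis by (rule has_bochner_integral_integral_eq)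
next
  case False
  have "\<not> integrable (laplace_measure b a) h"
  proof
    assume "integrable (laplace_measure b a) h"
    then have "has_bochner_integral lborel (\<lambda>t. laplace_density b t * h (a + t))
        (\<integral>z. h z \<partial>laplace_measure b a)"
      by (simp add: has_bochner_integral_laplace_measure[OF b, symmetric] has_bochner_integral_integrable)
    with False show False by (simp add: integrable.intros)
  qed
  with False show ?thesis by (simp add: not_integrable_integral_eq)
qed

lemma prob_space_laplace_measure:
  assumes "0 \<le> b"
  shows "prob_space (laplace_measure b a)"
proof (cases "b = 0")
  case False
  with assms have b: "0 < b" by simp
  have "has_bochner_integral (laplace_measure b a) (\<lambda>_. 1) (1 :: real)"
    using laplace_density_moments(1)[OF b] by (subst has_bochner_integral_laplace_measure[OF b]) simp_all
  then have "emeasure (laplace_measure b a) (space (laplace_measure b a)) = 1"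
    by (simp add: has_bochner_integral_iff integrable_iff_bounded)
       (metis emeasure_eq_ennreal_measure ennreal_1 less_top)
  then show ?thesis by (rule prob_spaceI)
qed (simp add: laplace_measure_def prob_space_return)

lemma laplace_measure_bias:
  assumes b: "0 \<le> b" and [measurable]: "g \<in> borel_measurable borel"
    and bound: "\<And>t. \<bar>g (a + t) - g a - c * t\<bar> \<le> K * \<bar>t\<bar> + K2 * t\<^sup>2"
  shows "integrable (laplace_measure b a) g \<and>
    \<bar>(\<integral>z. g z \<partial>laplace_measure b a) - g a\<bar> \<le> K * b + K2 * (2 * b\<^sup>2)"
proof (cases "b = 0")
  case True
  then show ?thesis
    by (simp add: laplace_measure_def integrable_iff_bounded nn_integral_return integral_return)
next
  case False
  with b have b: "0 < b" by simp
  let ?p = "laplace_density b"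
  define r where "r t = g (a + t) - g a - c * t" for t
  define m where "m t = K * (?p t * \<bar>t\<bar>) + K2 * (?p t * t\<^sup>2)" for t
  note moments = laplace_density_moments[OF b]
  have m: "has_bochner_integral lborel m (K * b + K2 * (2 * b\<^sup>2))"
    using has_bochner_integral_add[OF has_bochner_integral_mult_right[OF moments(3), of K]
        has_bochner_integral_mult_right[OF moments(4), of K2]]
    by (simp add: m_def[abs_def])
  have r_le_m: "\<bar>?p t * r t\<bar> \<le> m t" for t
  proof -
    have "\<bar>?p t * r t\<bar> = ?p t * \<bar>r t\<bar>"
      using laplace_density_nonneg[OF b] by (simp add: abs_mult)
    also have "\<dots> \<le> ?p t * (K * \<bar>t\<bar> + K2 * t\<^sup>2)"
      using bound[of t] laplace_density_nonneg[OF b] unfolding r_def by (intro mult_left_mono)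
    finally show ?thesis by (simp add: m_def algebra_simps)
  qed
  have r: "integrable lborel (\<lambda>t. ?p t * r t)"
  proof (rule Bochner_Integration.integrable_bound)
    show "integrable lborel m" using m by (simp add: has_bochner_integral_iff)
    show "(\<lambda>t. ?p t * r t) \<in> borel_measurable lborel" unfolding r_def by measurable
    show "AE t in lborel. norm (?p t * r t) \<le> norm (m t)"
      using order_trans[OF r_le_m abs_ge_self] by simp
  qed
  have "has_bochner_integral lborel (\<lambda>t. ?p t * r t + g a * ?p t + c * (?p t * t))
      ((\<integral>t. ?p t * r t \<partial>lborel) + g a * 1 + c * 0)"
    using r moments(1,2)
    by (intro has_bochner_integral_add has_bochner_integral_mult_right has_bochner_integral_integrable)
  moreover have "(\<lambda>t. ?p t * r t + g a * ?p t + c * (?p t * t)) = (\<lambda>t. ?p t * g (a + t))"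
    by (simp add: r_def algebra_simps)
  ultimately have "has_bochner_integral lborel (\<lambda>t. ?p t * g (a + t))
      ((\<integral>t. ?p t * r t \<partial>lborel) + g a)"
    by simp
  then have "has_bochner_integral (laplace_measure b a) g ((\<integral>t. ?p t * r t \<partial>lborel) + g a)"
    by (simp add: has_bochner_integral_laplace_measure[OF b])
  moreover have "\<bar>\<integral>t. ?p t * r t \<partial>lborel\<bar> \<le> K * b + K2 * (2 * b\<^sup>2)"
  proof -
    have "\<bar>\<integral>t. ?p t * r t \<partial>lborel\<bar> \<le> (\<integral>t. m t \<partial>lborel)"
      using r m r_le_m by (intro integral_abs_bound_integral) (auto simp: has_bochner_integral_iff)
    then show ?thesis using m by (simp add: has_bochner_integral_iff)
  qed
  ultimately show ?thesis by (simp add: has_bochner_integral_iff)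
qed

lemma laplace_measure_bias_lipschitz:
  assumes b: "0 \<le> b" and lip: "L-lipschitz_on UNIV g"
  shows "integrable (laplace_measure b a) g \<and> \<bar>(\<integral>z. g z \<partial>laplace_measure b a) - g a\<bar> \<le> L * b"
proof -
  have "g \<in> borel_measurable borel"
    using lipschitz_on_continuous_on[OF lip] by (rule borel_measurable_continuous_onI)
  moreover have "\<bar>g (a + t) - g a - 0 * t\<bar> \<le> L * \<bar>t\<bar> + 0 * t\<^sup>2" for t
    using lipschitz_onD[OF lip, of "a + t" a] by (simp add: dist_real_def)
  ultimately show ?thesis using laplace_measure_bias[OF b, of g a 0 L 0] by simp
qed

lemma laplace_measure_bias_smooth:
  assumes b: "0 \<le> b" and smooth: "smooth_with \<sigma> g"
  shows "integrable (laplace_measure b a) g \<and> \<bar>(\<integral>z. g z \<partial>laplace_measure b a) - g a\<bar> \<le> \<sigma> * b\<^sup>2"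
proof -
  have "continuous_on UNIV g"
    using smooth unfolding smooth_with_def
    by (simp add: continuous_at_imp_continuous_on differentiable_imp_continuous_within)
  then have "g \<in> borel_measurable borel" by (rule borel_measurable_continuous_onI)
  moreover have "\<bar>g (a + t) - g a - deriv g a * t\<bar> \<le> 0 * \<bar>t\<bar> + \<sigma> / 2 * t\<^sup>2" for t
    using smooth_with_taylor_bound[OF smooth] by simp
  ultimately show ?thesis using laplace_measure_bias[OF b, of g a "deriv g a" 0 "\<sigma> / 2"] by simp
qed

lemma laplace_measure_indistinguishable:
  assumes \<epsilon>: "0 \<le> \<epsilon>" and b: "0 \<le> b" and close: "\<bar>a - a'\<bar> \<le> \<epsilon> * b" and E: "E \<in> sets borel"
  shows "measure (laplace_measure b a) E \<le> exp \<epsilon> * measure (laplace_measure b a') E"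
proof (cases "b = 0")
  case True
  with close have "a = a'" by simp
  moreover have "measure (laplace_measure b a') E \<le> exp \<epsilon> * measure (laplace_measure b a') E"
    using \<epsilon> mult_right_mono[of 1 "exp \<epsilon>" "measure (laplace_measure b a') E"] by simp
  ultimately show ?thesis by simp
next
  case False
  with b have b: "0 < b" by simp
  interpret P: prob_space "laplace_measure b a" by (rule prob_space_laplace_measure) (use b in simp)
  interpret P': prob_space "laplace_measure b a'" by (rule prob_space_laplace_measure) (use b in simp)
  have density_le: "laplace_density b (z - a) \<le> exp \<epsilon> * laplace_density b (z - a')" for z
  proof -
    have "- \<bar>z - a\<bar> / b \<le> \<epsilon> + - \<bar>z - a'\<bar> / b"
      using close b by (simp add: field_simps)
    then have "exp (- \<bar>z - a\<bar> / b) \<le> exp \<epsilon> * exp (- \<bar>z - a'\<bar> / b)"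
      by (simp add: exp_add[symmetric])
    then show ?thesis unfolding laplace_density_def using b by (simp add: divide_right_mono)
  qed
  have "emeasure (laplace_measure b a) E = (\<integral>\<^sup>+ z. ennreal (laplace_density b (z - a)) * indicator E z \<partial>lborel)"
    using E b by (simp add: laplace_measure_def emeasure_density)
  also have "\<dots> \<le> (\<integral>\<^sup>+ z. ennreal (exp \<epsilon>) * (ennreal (laplace_density b (z - a')) * indicator E z) \<partial>lborel)"
    using density_le laplace_density_nonneg[OF b]
    by (intro nn_integral_mono) (auto simp: ennreal_mult[symmetric] split: split_indicator)
  also have "\<dots> = ennreal (exp \<epsilon>) * emeasure (laplace_measure b a') E"
    using E b by (simp add: laplace_measure_def emeasure_density nn_integral_cmult)
  finally have "ennreal (measure (laplace_measure b a) E) \<le> ennreal (exp \<epsilon> * measure (laplace_measure b a') E)"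
    by (simp add: P.emeasure_eq_measure P'.emeasure_eq_measure ennreal_mult)
  then show ?thesis by simp
qed

lemma dp_prediction_laplace:
  assumes stable: "uniform_RO_stable n A \<gamma>" and \<gamma>: "0 \<le> \<gamma>" and \<epsilon>: "0 < \<epsilon>"
  shows "dp_prediction n \<epsilon> (\<lambda>S x. laplace_measure (\<gamma> / \<epsilon>) (A S x))"
  unfolding dp_prediction_def prediction_algorithm_def
proof (intro conjI allI impI)
  show "prob_space (laplace_measure (\<gamma> / \<epsilon>) (A S x))" for S :: "('a \<times> 'b) list" and x
    using \<gamma> \<epsilon> by (simp add: prob_space_laplace_measure)
  fix x and S S' :: "('a \<times> 'b) list" and E :: "real set"
  assume "ro_neighbors n S S'" and "E \<in> sets borel"
  moreover have "\<epsilon> * (\<gamma> / \<epsilon>) = \<gamma>" using \<epsilon> by simp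
  ultimately show "measure (laplace_measure (\<gamma> / \<epsilon>) (A S x)) E \<le>
      exp \<epsilon> * measure (laplace_measure (\<gamma> / \<epsilon>) (A S' x)) E"
    using stable \<gamma> \<epsilon> unfolding uniform_RO_stable_def
    by (intro laplace_measure_indistinguishable) auto
qed simp

lemma LIMSEQ_floor_mult_divide: "(\<lambda>k. of_int \<lfloor>real (Suc k) * x\<rfloor> / real (Suc k)) \<longlonglongrightarrow> x"
proof (rule tendsto_sandwich[where f="\<lambda>k. x - 1 / real (Suc k)" and h="\<lambda>k. x"])
  have "x - 1 / real (Suc k) \<le> of_int \<lfloor>real (Suc k) * x\<rfloor> / real (Suc k)"
    and "of_int \<lfloor>real (Suc k) * x\<rfloor> / real (Suc k) \<le> x" for k
  proof -
    have "real (Suc k) * x - 1 \<le> of_int \<lfloor>real (Suc k) * x\<rfloor>"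
      and "of_int \<lfloor>real (Suc k) * x\<rfloor> \<le> real (Suc k) * x" by linarith+
    then have "(real (Suc k) * x - 1) / real (Suc k) \<le> of_int \<lfloor>real (Suc k) * x\<rfloor> / real (Suc k)"
      and "of_int \<lfloor>real (Suc k) * x\<rfloor> / real (Suc k) \<le> real (Suc k) * x / real (Suc k)"
      by (simp_all only: divide_right_mono of_nat_0_le_iff)
    then show "x - 1 / real (Suc k) \<le> of_int \<lfloor>real (Suc k) * x\<rfloor> / real (Suc k)"
      and "of_int \<lfloor>real (Suc k) * x\<rfloor> / real (Suc k) \<le> x"
      by (simp_all add: diff_divide_distrib del: of_nat_Suc)
  qed
  then show "\<forall>\<^sub>F k in sequentially. x - 1 / real (Suc k) \<le> of_int \<lfloor>real (Suc k) * x\<rfloor> / real (Suc k)"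
    and "\<forall>\<^sub>F k in sequentially. of_int \<lfloor>real (Suc k) * x\<rfloor> / real (Suc k) \<le> x"
    by simp_all
  show "(\<lambda>k. x - 1 / real (Suc k)) \<longlonglongrightarrow> x"
    using tendsto_diff[OF tendsto_const LIMSEQ_inverse_real_of_nat, of x] by (simp add: inverse_eq_divide)
qed simp

text \<open>Rounding \<open>v\<close> to the grid \<open>\<int> / k\<close> makes the substitution a countable case distinction;
  continuity in the first argument passes to the limit.\<close>
lemma borel_measurable_continuous_substitution:
  fixes f :: "real \<Rightarrow> 'a \<Rightarrow> real"
  assumes f: "\<And>z. f z \<in> borel_measurable M" and cont: "\<And>p. continuous_on UNIV (\<lambda>z. f z p)"
    and [measurable]: "v \<in> borel_measurable M"
  shows "(\<lambda>p. f (v p) p) \<in> borel_measurable M"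
proof (rule borel_measurable_LIMSEQ_real)
  define h where "h k p = f (of_int \<lfloor>real (Suc k) * v p\<rfloor> / real (Suc k)) p" for k p
  show "h k \<in> borel_measurable M" for k
    unfolding h_def
  proof (rule measurable_compose_countable[where f="\<lambda>i. f (of_int i / real (Suc k))"])
    show "f (of_int i / real (Suc k)) \<in> borel_measurable M" for i :: int by (rule f)
  qed measurable
  show "(\<lambda>k. h k p) \<longlonglongrightarrow> f (v p) p" for p
    unfolding h_def
    using cont[of p] by (intro isCont_tendsto_compose[OF _ LIMSEQ_floor_mult_divide])
      (simp add: continuous_on_eq_continuous_at)
qed

lemma borel_measurable_integral_laplace_measure:
  fixes f :: "real \<Rightarrow> 'a \<Rightarrow> real"
  assumes b: "0 \<le> b" and f: "\<And>z. f z \<in> borel_measurable M"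
    and cont: "\<And>p. continuous_on UNIV (\<lambda>z. f z p)" and v[measurable]: "v \<in> borel_measurable M"
  shows "(\<lambda>p. \<integral>z. f z p \<partial>laplace_measure b (v p)) \<in> borel_measurable M"
proof (cases "b = 0")
  case True
  have "(\<lambda>p. f (v p) p) \<in> borel_measurable M"
    using f cont v by (rule borel_measurable_continuous_substitution)
  then show ?thesis
    using True cont by (simp add: laplace_measure_def integral_return borel_measurable_continuous_onI)
next
  case False
  with b have b: "0 < b" by simp
  have "(\<lambda>q. f (v (fst q) + snd q) (fst q)) \<in> borel_measurable (M \<Otimes>\<^sub>M lborel)"
    using measurable_compose[OF measurable_fst f] cont
    by (rule borel_measurable_continuous_substitution) measurable
  then have "(\<lambda>(p, t). laplace_density b t * f (v p + t) p) \<in> borel_measurable (M \<Otimes>\<^sub>M lborel)"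
    unfolding case_prod_beta' by measurable
  then have "(\<lambda>p. \<integral>t. laplace_density b t * f (v p + t) p \<partial>lborel) \<in> borel_measurable M"
    by (rule lborel.borel_measurable_lebesgue_integral)
  then show ?thesis
    using cont by (simp add: integral_laplace_measure[OF b] borel_measurable_continuous_onI)
qed

lemma (in prob_space) integral_le_add_if_abs_diff_le:
  fixes F G :: "'a \<Rightarrow> real"
  assumes F: "F \<in> borel_measurable M" and G: "integrable M G" and close: "\<And>p. \<bar>F p - G p\<bar> \<le> C"
  shows "integrable M F \<and> (\<integral>p. F p \<partial>M) \<le> (\<integral>p. G p \<partial>M) + C"
proof
  have "integrable M (\<lambda>p. F p - G p)"
    using close F borel_measurable_integrable[OF G] by (intro integrable_const_bound[where B=C]) auto
  from Bochner_Integration.integrable_add[OF this G] show F_int: "integrable M F" by simp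
  have "(\<integral>p. F p \<partial>M) \<le> (\<integral>p. G p + C \<partial>M)"
    using F_int G close[unfolded abs_le_iff] by (intro integral_mono) (auto simp: algebra_simps)
  also have "\<dots> = (\<integral>p. G p \<partial>M) + C"
    using G by (simp add: prob_space)
  finally show "(\<integral>p. F p \<partial>M) \<le> (\<integral>p. G p \<partial>M) + C" .
qed

lemma laplace_prediction_risk_le:
  fixes loss :: "real \<Rightarrow> 'y \<Rightarrow> real" and u :: "'x \<Rightarrow> real" and P :: "('x \<times> 'y) measure"
  assumes b: "0 \<le> b" and P: "prob_space P" and u: "(\<lambda>p. u (fst p)) \<in> borel_measurable P"
    and loss: "\<And>z. (\<lambda>p. loss z (snd p)) \<in> borel_measurable P"
    and cont: "\<And>y. continuous_on UNIV (\<lambda>z. loss z y)"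
    and risk: "integrable P (\<lambda>p. loss (u (fst p)) (snd p))"
    and bias: "\<And>a y. integrable (laplace_measure b a) (\<lambda>z. loss z y) \<and>
      \<bar>(\<integral>z. loss z y \<partial>laplace_measure b a) - loss a y\<bar> \<le> C"
  shows "(\<forall>x y. integrable (laplace_measure b (u x)) (\<lambda>z. loss z y)) \<and>
    integrable P (\<lambda>p. \<integral>z. loss z (snd p) \<partial>laplace_measure b (u (fst p))) \<and>
    (\<integral>p. (\<integral>z. loss z (snd p) \<partial>laplace_measure b (u (fst p))) \<partial>P)
      \<le> (\<integral>p. loss (u (fst p)) (snd p) \<partial>P) + C"
  using prob_space.integral_le_add_if_abs_diff_le[OF P
      borel_measurable_integral_laplace_measure[OF b loss cont u] risk, of C] bias
  by blast

theorem lemma14: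
  fixes loss :: "real \<Rightarrow> 'y \<Rightarrow> real"
    and A :: "('x \<times> 'y) list \<Rightarrow> 'x \<Rightarrow> real"
    and n :: nat and \<gamma> \<epsilon> :: real
  assumes convex: "\<forall>y. convex_on UNIV (\<lambda>z. loss z y)"
    and stable: "uniform_RO_stable n A \<gamma>"
    and gamma_nonneg: "0 \<le> \<gamma>"
    and eps_pos: "\<epsilon> > 0"
  shows "\<exists>M :: ('x \<times> 'y) list \<Rightarrow> 'x \<Rightarrow> real measure.
    dp_prediction n \<epsilon> M \<and>
    (\<forall>S (P :: ('x \<times> 'y) measure).
       length S = n \<and> prob_space P \<and>
       (\<lambda>p. A S (fst p)) \<in> borel_measurable P \<and>
       (\<forall>z. (\<lambda>p. loss z (snd p)) \<in> borel_measurable P) \<and>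
       integrable P (\<lambda>p. loss (A S (fst p)) (snd p))
     \<longrightarrow>
       (\<forall>L. (\<forall>y. L-lipschitz_on UNIV (\<lambda>z. loss z y)) \<longrightarrow>
          (\<forall>x y. integrable (M S x) (\<lambda>z. loss z y)) \<and>
          integrable P (\<lambda>p. \<integral>z. loss z (snd p) \<partial>(M S (fst p))) \<and>
          (\<integral>p. (\<integral>z. loss z (snd p) \<partial>(M S (fst p))) \<partial>P)
            \<le> (\<integral>p. loss (A S (fst p)) (snd p) \<partial>P) + L * \<gamma> / \<epsilon>) \<and>
       (\<forall>\<sigma>. (\<forall>y. smooth_with \<sigma> (\<lambda>z. loss z y)) \<longrightarrow>
          (\<forall>x y. integrable (M S x) (\<lambda>z. loss z y)) \<and>
          integrable P (\<lambda>p. \<integral>z. loss z (snd p) \<partial>(M S (fst p))) \<and>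
          (\<integral>p. (\<integral>z. loss z (snd p) \<partial>(M S (fst p))) \<partial>P)
            \<le> (\<integral>p. loss (A S (fst p)) (snd p) \<partial>P) + \<sigma> * \<gamma>\<^sup>2 / \<epsilon>\<^sup>2))"
proof -
  define b where "b = \<gamma> / \<epsilon>"
  have b: "0 \<le> b" using gamma_nonneg eps_pos by (simp add: b_def)
  \<comment> \<open>Convexity is used only here, to make the randomized risk measurable.\<close>
  have cont: "continuous_on UNIV (\<lambda>z. loss z y)" for y
    using convex convex_on_continuous[OF open_UNIV] by blast
  have dp: "dp_prediction n \<epsilon> (\<lambda>S x. laplace_measure b (A S x))"
    unfolding b_def using stable gamma_nonneg eps_pos by (rule dp_prediction_laplace)
  show ?thesis
  proof (rule exI, rule conjI[OF dp], intro allI impI, rule conjI; intro allI impI)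
    fix S and P :: "('x \<times> 'y) measure"
    assume "length S = n \<and> prob_space P \<and> (\<lambda>p. A S (fst p)) \<in> borel_measurable P \<and>
      (\<forall>z. (\<lambda>p. loss z (snd p)) \<in> borel_measurable P) \<and> integrable P (\<lambda>p. loss (A S (fst p)) (snd p))"
    then have P: "prob_space P" and A: "(\<lambda>p. A S (fst p)) \<in> borel_measurable P"
      and loss: "\<And>z. (\<lambda>p. loss z (snd p)) \<in> borel_measurable P"
      and risk: "integrable P (\<lambda>p. loss (A S (fst p)) (snd p))" by auto
    note risk_le = laplace_prediction_risk_le[OF b P A loss cont risk]
    show "(\<forall>x y. integrable (laplace_measure b (A S x)) (\<lambda>z. loss z y)) \<and>
        integrable P (\<lambda>p. \<integral>z. loss z (snd p) \<partial>laplace_measure b (A S (fst p))) \<and>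
        (\<integral>p. (\<integral>z. loss z (snd p) \<partial>laplace_measure b (A S (fst p))) \<partial>P)
          \<le> (\<integral>p. loss (A S (fst p)) (snd p) \<partial>P) + L * \<gamma> / \<epsilon>"
      if "\<forall>y. L-lipschitz_on UNIV (\<lambda>z. loss z y)" for L
      using risk_le[OF laplace_measure_bias_lipschitz[OF b spec[OF that]]] by (simp add: b_def)
    show "(\<forall>x y. integrable (laplace_measure b (A S x)) (\<lambda>z. loss z y)) \<and>
        integrable P (\<lambda>p. \<integral>z. loss z (snd p) \<partial>laplace_measure b (A S (fst p))) \<and>
        (\<integral>p. (\<integral>z. loss z (snd p) \<partial>laplace_measure b (A S (fst p))) \<partial>P)
          \<le> (\<integral>p. loss (A S (fst p)) (snd p) \<partial>P) + \<sigma> * \<gamma>\<^sup>2 / \<epsilon>\<^sup>2"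
      if "\<forall>y. smooth_with \<sigma> (\<lambda>z. loss z y)" for \<sigma>
      using risk_le[OF laplace_measure_bias_smooth[OF b spec[OF that]]] by (simp add: b_def power_divide)
  qed
qed

end
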